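(* For every integer $s\ge2$, $v^*_{RLP,2}=\tfrac12(\sqrt s+s)$.
   Context: Let $\Xi_2:=\{\xi\in\mathbb R^s:\|\xi-\tfrac12\mathbb 1_s\|_2\le\tfrac12\}$, where $\mathbb 1_s$ is the all-ones vector. Define $v^*_{RLP,2}$ as the infimum of $\sup_{\xi\in\Xi_2}y(\xi)_s$ over all maps $y:\Xi_2\to\mathbb R^s$ satisfying, for all $\xi\in\Xi_2$: $y(\xi)_1\ge\max\{\xi_1,1-\xi_1\}$ and $y(\xi)_i\ge\max\{\xi_i,1-\xi_i\}+y(\xi)_{i-1}$ for $i=2,\dots,s$. *)

theory Defs
  imports Complex_Main "HOL-Library.Extended_Real"
begin

text \<open>Vectors in R^s are represented as functions nat => real, with
  coordinates indexed 1..s and all other coordinates equal to 0.\<close>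

definition Xi2 :: "nat \<Rightarrow> (nat \<Rightarrow> real) set" where
  "Xi2 s = {\<xi>. (\<forall>i. i \<notin> {1..s} \<longrightarrow> \<xi> i = 0) \<and>
                 sqrt (\<Sum>i=1..s. (\<xi> i - 1/2)^2) \<le> 1/2}"

definition feasible_RLP :: "nat \<Rightarrow> ((nat \<Rightarrow> real) \<Rightarrow> (nat \<Rightarrow> real)) \<Rightarrow> bool" where
  "feasible_RLP s y \<longleftrightarrow>
     (\<forall>\<xi>\<in>Xi2 s. y \<xi> 1 \<ge> max (\<xi> 1) (1 - \<xi> 1) \<and>
        (\<forall>i\<in>{2..s}. y \<xi> i \<ge> max (\<xi> i) (1 - \<xi> i) + y \<xi> (i - 1)))"

definition v_RLP2 :: "nat \<Rightarrow> ereal" where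
  "v_RLP2 s = (INF y\<in>{y. feasible_RLP s y}. (SUP \<xi>\<in>Xi2 s. ereal (y \<xi> s)))"

end

theory Submission
  imports Defs "HOL-Analysis.L2_Norm"
begin

text \<open>Chaining the constraints shows that every feasible policy dominates the partial sums
  \<open>\<Sum>i\<le>k. max \<xi>\<^sub>i (1 - \<xi>\<^sub>i)\<close>, and these partial sums form a feasible policy themselves.
  So the value is the maximum over the ball of \<open>\<Sum>i. max \<xi>\<^sub>i (1 - \<xi>\<^sub>i) = s/2 + \<Sum>i. \<bar>\<xi>\<^sub>i - 1/2\<bar>\<close>,
  an \<open>\<ell>\<^sub>1\<close>-norm over an \<open>\<ell>\<^sub>2\<close>-ball of radius 1/2. By Cauchy-Schwarz it is at most
  \<open>s/2 + \<surd>s/2\<close>, attained on the diagonal at \<open>\<xi>\<^sub>i = 1/2 + 1/(2\<surd>s)\<close>.\<close>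

definition min_policy_RLP :: "(nat \<Rightarrow> real) \<Rightarrow> nat \<Rightarrow> real" where
  "min_policy_RLP \<xi> k = (\<Sum>i=1..k. max (\<xi> i) (1 - \<xi> i))"

lemma feasible_RLP_min_policy: "feasible_RLP s min_policy_RLP"
  unfolding feasible_RLP_def
proof (intro ballI conjI)
  fix \<xi> :: "nat \<Rightarrow> real" and i
  show "max (\<xi> 1) (1 - \<xi> 1) \<le> min_policy_RLP \<xi> 1"
    by (simp add: min_policy_RLP_def)
  assume "i \<in> {2..s}"
  then obtain k where "i = Suc k" "1 \<le> k"
    by (metis Suc_1 Suc_le_D Suc_le_mono atLeastAtMost_iff)
  then show "max (\<xi> i) (1 - \<xi> i) + min_policy_RLP \<xi> (i - 1) \<le> min_policy_RLP \<xi> i"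
    by (simp add: min_policy_RLP_def)
qed

lemma min_policy_RLP_le:
  assumes "feasible_RLP s y" "\<xi> \<in> Xi2 s" "1 \<le> k" "k \<le> s"
  shows "min_policy_RLP \<xi> k \<le> y \<xi> k"
  using assms(3,4)
proof (induction k rule: dec_induct)
  case base
  then show ?case
    using assms(1,2) by (simp add: feasible_RLP_def min_policy_RLP_def)
next
  case (step m)
  have "Suc m \<in> {2..s}"
    using step by auto
  then have "max (\<xi> (Suc m)) (1 - \<xi> (Suc m)) + y \<xi> m \<le> y \<xi> (Suc m)"
    using assms(1,2) unfolding feasible_RLP_def by fastforce
  with step show ?case
    by (simp add: min_policy_RLP_def)
qed

lemma sum_abs_le_sqrt_card_L2_set:
  "(\<Sum>i\<in>A. \<bar>f i\<bar>) \<le> sqrt (real (card A)) * L2_set f A"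
  using L2_set_mult_ineq[of f "\<lambda>_. 1" A] by (simp add: L2_set_constant mult.commute)

lemma min_policy_RLP_le_on_Xi2:
  assumes "\<xi> \<in> Xi2 s"
  shows "min_policy_RLP \<xi> s \<le> (sqrt (real s) + real s) / 2"
proof -
  have radius: "L2_set (\<lambda>i. \<xi> i - 1/2) {1..s} \<le> 1/2"
    using assms by (simp add: Xi2_def L2_set_def)
  have "max x (1 - x) = 1/2 + \<bar>x - 1/2\<bar>" for x :: real
    by auto
  then have "min_policy_RLP \<xi> s = real s / 2 + (\<Sum>i=1..s. \<bar>\<xi> i - 1/2\<bar>)"
    by (simp add: min_policy_RLP_def sum.distrib)
  also have "(\<Sum>i=1..s. \<bar>\<xi> i - 1/2\<bar>) \<le> sqrt (real s) * L2_set (\<lambda>i. \<xi> i - 1/2) {1..s}"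
    using sum_abs_le_sqrt_card_L2_set[of "\<lambda>i. \<xi> i - 1/2" "{1..s}"] by simp
  also have "\<dots> \<le> sqrt (real s) * (1/2)"
    using radius by (intro mult_left_mono) auto
  finally show ?thesis
    by simp
qed

definition Xi2_diagonal_point :: "nat \<Rightarrow> nat \<Rightarrow> real" where
  "Xi2_diagonal_point s i = (if i \<in> {1..s} then 1/2 + 1 / (2 * sqrt (real s)) else 0)"

lemma Xi2_diagonal_point_mem:
  assumes "1 \<le> s"
  shows "Xi2_diagonal_point s \<in> Xi2 s"
proof -
  have "(\<Sum>i=1..s. (Xi2_diagonal_point s i - 1/2)^2) = real s * (1 / (2 * sqrt (real s)))^2"
    by (simp add: Xi2_diagonal_point_def)
  also have "\<dots> = (1/2)^2"
    using assms by (simp add: power_divide power_mult_distrib)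
  finally show ?thesis
    by (simp add: Xi2_def Xi2_diagonal_point_def)
qed

lemma min_policy_RLP_Xi2_diagonal_point:
  assumes "1 \<le> s"
  shows "min_policy_RLP (Xi2_diagonal_point s) s = (sqrt (real s) + real s) / 2"
proof -
  have "min_policy_RLP (Xi2_diagonal_point s) s = real s * (1/2 + 1 / (2 * sqrt (real s)))"
    by (simp add: min_policy_RLP_def Xi2_diagonal_point_def)
  also have "\<dots> = (sqrt (real s) + real s) / 2"
    using assms real_sqrt_mult_self[of "real s"] by (simp add: field_simps)
  finally show ?thesis .
qed

theorem lemma2:
  fixes s :: nat
  assumes "s \<ge> 2"
  shows "v_RLP2 s = ereal ((sqrt (real s) + real s) / 2)"
proof (rule antisym)
  show "v_RLP2 s \<le> ereal ((sqrt (real s) + real s) / 2)"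
    unfolding v_RLP2_def
    by (rule INF_lower2[of min_policy_RLP])
      (use min_policy_RLP_le_on_Xi2 in \<open>auto simp: feasible_RLP_min_policy intro!: SUP_least\<close>)
  have "1 \<le> s" using assms by simp
  show "ereal ((sqrt (real s) + real s) / 2) \<le> v_RLP2 s"
    unfolding v_RLP2_def
  proof (rule INF_greatest)
    fix y assume "y \<in> {y. feasible_RLP s y}"
    then have "(sqrt (real s) + real s) / 2 \<le> y (Xi2_diagonal_point s) s"
      using min_policy_RLP_le[of s y "Xi2_diagonal_point s" s] \<open>1 \<le> s\<close>
      by (simp add: Xi2_diagonal_point_mem min_policy_RLP_Xi2_diagonal_point)
    then show "ereal ((sqrt (real s) + real s) / 2) \<le> (SUP \<xi>\<in>Xi2 s. ereal (y \<xi> s))"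
      by (intro SUP_upper2[OF Xi2_diagonal_point_mem[OF \<open>1 \<le> s\<close>]]) simp
  qed
qed

end
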